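(* Let $H$ be a graph on $m\le n$ vertices, regarded as a subgraph of $K_n$ on $m$ of its vertices. If there exists a $(v,k,1)$-design with $k\ge m$ and $v-k\ge n-m$, then \[\operatorname{scp}(K_n-H)\ \le\ \frac{n(v-1)}{k-1}+\operatorname{scp}(\overline{H})-m.\]
   Context: A $(v,k,1)$-design (with $k\ge 2$) is a pair $(P,\mathcal{B})$ where $|P|=v$ and $\mathcal{B}$ is a collection of $k$-subsets of $P$ such that every two distinct points lie in exactly one block. $\overline{H}$ is the complement of $H$ on its own $m$ vertices; $K_n-H$ is obtained from $K_n$ by deleting the edges of $H$. $\operatorname{scp}(G)$ is the minimum, over all families of cliques of $G$ covering each edge exactly once, of the sum of the clique sizes. *)

theory Defs
  imports Complex_Main
begin

definition all_edges :: "'a set \<Rightarrow> 'a set set" where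
  "all_edges V = {{x, y} | x y. x \<in> V \<and> y \<in> V \<and> x \<noteq> y}"

definition is_graph :: "'a set \<Rightarrow> 'a set set \<Rightarrow> bool" where
  "is_graph V E \<longleftrightarrow> finite V \<and> E \<subseteq> all_edges V"

definition is_clique :: "'a set \<Rightarrow> 'a set set \<Rightarrow> 'a set \<Rightarrow> bool" where
  "is_clique V E C \<longleftrightarrow> C \<subseteq> V \<and> (\<forall>x\<in>C. \<forall>y\<in>C. x \<noteq> y \<longrightarrow> {x, y} \<in> E)"

definition is_clique_partition :: "'a set \<Rightarrow> 'a set set \<Rightarrow> 'a set set \<Rightarrow> bool" where
  "is_clique_partition V E F \<longleftrightarrow> finite F \<and> (\<forall>C\<in>F. is_clique V E C) \<and>
     (\<forall>e\<in>E. \<exists>!C. C \<in> F \<and> e \<subseteq> C)"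

definition scp :: "'a set \<Rightarrow> 'a set set \<Rightarrow> nat" where
  "scp V E = Inf {\<Sum>C\<in>F. card C | F. is_clique_partition V E F}"

definition is_design :: "'b set \<Rightarrow> 'b set set \<Rightarrow> nat \<Rightarrow> nat \<Rightarrow> bool" where
  "is_design P B v k \<longleftrightarrow> finite P \<and> card P = v \<and> 2 \<le> k \<and>
     (\<forall>b\<in>B. b \<subseteq> P \<and> card b = k) \<and>
     (\<forall>x\<in>P. \<forall>y\<in>P. x \<noteq> y \<longrightarrow> (\<exists>!b. b \<in> B \<and> x \<in> b \<and> y \<in> b))"

end

theory Submission
  imports Defs
begin

text \<open>
  Embed the vertices of \<open>K\<^sub>n\<close> injectively into the points of the design so that exactly the
  vertices of \<open>H\<close> land in one fixed block \<open>b\<^sub>0\<close>; this is possible since \<open>k \<ge> m\<close> and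
  \<open>v - k \<ge> n - m\<close>. Every block other than \<open>b\<^sub>0\<close> meets the image of \<open>H\<close> in at most one point, so
  its trace on the vertices is a clique of \<open>K\<^sub>n - H\<close>. These traces together with an optimal
  clique partition of \<open>H\<close>'s complement cover every edge exactly once. Each point lies on
  \<open>r = (v - 1)/(k - 1)\<close> blocks, so the traces of all blocks have total size \<open>n r\<close>, and
  dropping \<open>b\<^sub>0\<close>, whose trace is \<open>V(H)\<close>, removes \<open>m\<close>.
\<close>

lemma scp_le_sum:
  assumes "is_clique_partition V E F"
  shows "scp V E \<le> (\<Sum>C\<in>F. card C)"
  unfolding scp_def using assms by (intro cInf_lower) auto

lemma scp_attained:
  assumes "is_clique_partition V E F0"
  obtains F where "is_clique_partition V E F" "scp V E = (\<Sum>C\<in>F. card C)"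
proof -
  have "{\<Sum>C\<in>F. card C | F. is_clique_partition V E F} \<noteq> {}" using assms by auto
  from Inf_nat_def1[OF this] obtain F where "is_clique_partition V E F"
      "Inf {\<Sum>C\<in>F. card C | F. is_clique_partition V E F} = (\<Sum>C\<in>F. card C)"
    by auto
  with that show ?thesis unfolding scp_def by blast
qed

lemma finite_all_edges: "finite V \<Longrightarrow> finite (all_edges V)"
  by (rule finite_subset[of _ "Pow V"]) (auto simp: all_edges_def)

lemma all_edges_mono: "M \<subseteq> V \<Longrightarrow> all_edges M \<subseteq> all_edges V"
  unfolding all_edges_def by blast

lemma is_clique_mono:
  assumes "is_clique M E C" "M \<subseteq> V" "E \<subseteq> E'"
  shows "is_clique V E' C"
  using assms unfolding is_clique_def by blast

lemma is_clique_partition_edges: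
  assumes "finite V" "E \<subseteq> all_edges V"
  shows "is_clique_partition V E E"
  unfolding is_clique_partition_def
proof (intro conjI ballI)
  show "finite E" using assms finite_all_edges finite_subset by blast
next
  fix C assume "C \<in> E"
  with assms obtain x y where "C = {x, y}" "x \<in> V" "y \<in> V"
    unfolding all_edges_def by auto
  with \<open>C \<in> E\<close> show "is_clique V E C"
    unfolding is_clique_def by (auto simp: insert_commute)
next
  fix e assume "e \<in> E"
  with assms have "e \<in> all_edges V" by blast
  then show "\<exists>!C. C \<in> E \<and> e \<subseteq> C"
    using \<open>e \<in> E\<close> assms unfolding all_edges_def by (auto 0 4 simp: doubleton_eq_iff)
qed

lemma design_finite_blocks:
  assumes "is_design P B v k"
  shows "finite B"
  using assms unfolding is_design_def by (auto intro: finite_subset[of B "Pow P"])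

lemma design_replication:
  assumes D: "is_design P B v k" and p: "p \<in> P"
  shows "card {b\<in>B. p \<in> b} * (k - 1) = v - 1"
proof -
  have finP: "finite P" and cardP: "card P = v"
    and blk: "\<And>b. b \<in> B \<Longrightarrow> b \<subseteq> P \<and> card b = k"
    and pair: "\<And>x y. x \<in> P \<Longrightarrow> y \<in> P \<Longrightarrow> x \<noteq> y \<Longrightarrow> \<exists>!b. b \<in> B \<and> x \<in> b \<and> y \<in> b"
    using D unfolding is_design_def by auto
  define Bp where "Bp = {b\<in>B. p \<in> b}"
  have fin_block: "finite b" if "b \<in> B" for b
    using blk[OF that] finP finite_subset by blast
  have finBp: "finite Bp" using design_finite_blocks[OF D] unfolding Bp_def by auto
  \<comment> \<open>the blocks through \<open>p\<close> partition the remaining points\<close>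
  have cover: "(\<Union>b\<in>Bp. b - {p}) = P - {p}"
    using blk pair[OF p] unfolding Bp_def by fastforce
  have disjoint: "(b - {p}) \<inter> (c - {p}) = {}" if "b \<in> Bp" "c \<in> Bp" "b \<noteq> c" for b c
  proof -
    have "y \<in> P \<Longrightarrow> y \<noteq> p \<Longrightarrow> y \<in> b \<Longrightarrow> y \<in> c \<Longrightarrow> False" for y
      using pair[OF p, of y] that unfolding Bp_def by blast
    then show ?thesis using that blk unfolding Bp_def by blast
  qed
  have "card (P - {p}) = (\<Sum>b\<in>Bp. card (b - {p}))"
    unfolding cover[symmetric] using finBp disjoint fin_block
    by (intro card_UN_disjoint) (auto simp: Bp_def)
  also have "\<dots> = card Bp * (k - 1)"
    by (simp add: Bp_def blk)
  finally show ?thesis using cardP p finP Bp_def by simp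
qed

lemma design_replication_real:
  assumes D: "is_design P B v k" and p: "p \<in> P"
  shows "real (card {b\<in>B. p \<in> b}) = (real v - 1) / (real k - 1)"
proof -
  have "2 \<le> k" "finite P" "card P = v" using D unfolding is_design_def by auto
  with p have "1 \<le> v" by (metis card_0_eq empty_iff less_one not_le)
  with \<open>2 \<le> k\<close> show ?thesis
    using arg_cong[OF design_replication[OF D p], of real] by (simp add: of_nat_diff field_simps)
qed

locale design_embedding =
  fixes P :: "'b set" and B :: "'b set set" and v k :: nat
    and V M :: "'a set" and \<phi> :: "'a \<Rightarrow> 'b" and b\<^sub>0 :: "'b set"
  assumes design: "is_design P B v k"
    and finite_V: "finite V" and M_subset: "M \<subseteq> V"
    and inj: "inj_on \<phi> V" and maps_to: "\<phi> ` V \<subseteq> P"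
    and block\<^sub>0: "b\<^sub>0 \<in> B"
    and in_block\<^sub>0_iff: "x \<in> V \<Longrightarrow> \<phi> x \<in> b\<^sub>0 \<longleftrightarrow> x \<in> M"
begin

definition trace :: "'b set \<Rightarrow> 'a set" where
  "trace b = {x\<in>V. \<phi> x \<in> b}"

lemma trace_block\<^sub>0: "trace b\<^sub>0 = M"
  using in_block\<^sub>0_iff M_subset unfolding trace_def by auto

lemma unique_block:
  assumes "x \<in> V" "y \<in> V" "x \<noteq> y"
  shows "\<exists>!b. b \<in> B \<and> \<phi> x \<in> b \<and> \<phi> y \<in> b"
proof -
  have "\<phi> x \<in> P" "\<phi> y \<in> P" using maps_to assms by auto
  moreover have "\<phi> x \<noteq> \<phi> y" using inj assms by (auto dest: inj_onD)
  ultimately show ?thesis using design unfolding is_design_def by blast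
qed

lemma block_eq_block\<^sub>0:
  assumes "b \<in> B" "x \<in> M" "y \<in> M" "x \<noteq> y" "\<phi> x \<in> b" "\<phi> y \<in> b"
  shows "b = b\<^sub>0"
proof -
  have "x \<in> V" "y \<in> V" using assms M_subset by auto
  with assms show ?thesis
    using unique_block[of x y] block\<^sub>0 in_block\<^sub>0_iff by blast
qed

lemma is_clique_trace:
  assumes EH: "EH \<subseteq> all_edges M" and b: "b \<in> B - {b\<^sub>0}"
  shows "is_clique V (all_edges V - EH) (trace b)"
  unfolding is_clique_def
proof (intro conjI ballI impI)
  show "trace b \<subseteq> V" unfolding trace_def by auto
next
  fix x y assume xy: "x \<in> trace b" "y \<in> trace b" "x \<noteq> y"
  then have "{x, y} \<in> all_edges V" unfolding trace_def all_edges_def by auto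
  moreover have "{x, y} \<notin> EH"
  proof
    assume "{x, y} \<in> EH"
    with EH have "x \<in> M" "y \<in> M" unfolding all_edges_def by (auto simp: doubleton_eq_iff)
    with xy b show False using block_eq_block\<^sub>0[of b x y] unfolding trace_def by auto
  qed
  ultimately show "{x, y} \<in> all_edges V - EH" by blast
qed

text \<open>
  An edge inside \<open>M\<close> lies in no trace other than \<open>trace b\<^sub>0 = M\<close>, and an edge leaving \<open>M\<close>
  lies in no clique on \<open>M\<close>; so the two families cover disjoint sets of edges.
\<close>

theorem clique_partition_traces:
  assumes EH: "EH \<subseteq> all_edges M"
    and F: "is_clique_partition M (all_edges M - EH) F"
  shows "is_clique_partition V (all_edges V - EH) (trace ` (B - {b\<^sub>0}) \<union> F)"
  unfolding is_clique_partition_def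
proof (intro conjI ballI)
  have "finite F" "\<And>C. C \<in> F \<Longrightarrow> is_clique M (all_edges M - EH) C"
    using F unfolding is_clique_partition_def by auto
  then show "finite (trace ` (B - {b\<^sub>0}) \<union> F)"
    and "C \<in> trace ` (B - {b\<^sub>0}) \<union> F \<Longrightarrow> is_clique V (all_edges V - EH) C" for C
    using design_finite_blocks[OF design] is_clique_trace[OF EH]
      is_clique_mono[OF _ M_subset Diff_mono[OF all_edges_mono[OF M_subset] order_refl]]
    by auto
next
  fix e assume "e \<in> all_edges V - EH"
  then obtain x y where e: "e = {x, y}" "x \<in> V" "y \<in> V" "x \<noteq> y" "e \<notin> EH"
    unfolding all_edges_def by auto
  have F_sub: "C \<subseteq> M" if "C \<in> F" for C
    using F that unfolding is_clique_partition_def is_clique_def by auto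
  show "\<exists>!C. C \<in> trace ` (B - {b\<^sub>0}) \<union> F \<and> e \<subseteq> C"
  proof (cases "x \<in> M \<and> y \<in> M")
    case True
    then have "e \<in> all_edges M - EH" using e unfolding all_edges_def by auto
    then have "\<exists>!C. C \<in> F \<and> e \<subseteq> C" using F unfolding is_clique_partition_def by blast
    moreover have "\<not> e \<subseteq> trace b" if "b \<in> B - {b\<^sub>0}" for b
      using that True e block_eq_block\<^sub>0[of b x y] unfolding trace_def by auto
    ultimately show ?thesis by blast
  next
    case False
    then obtain b where b: "b \<in> B" "\<phi> x \<in> b" "\<phi> y \<in> b"
      and b_unique: "\<And>b'. b' \<in> B \<Longrightarrow> \<phi> x \<in> b' \<Longrightarrow> \<phi> y \<in> b' \<Longrightarrow> b' = b"
      using unique_block[OF e(2-4)] by metis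
    have "b \<noteq> b\<^sub>0" using False b in_block\<^sub>0_iff e by auto
    have "\<not> e \<subseteq> C" if "C \<in> F" for C using F_sub[OF that] False e by blast
    moreover have "e \<subseteq> trace b' \<longleftrightarrow> b' = b" if "b' \<in> B" for b'
      using b b_unique[OF that] e unfolding trace_def by auto
    ultimately show ?thesis using b \<open>b \<noteq> b\<^sub>0\<close> by (auto simp: image_iff)
  qed
qed

lemma sum_card_trace:
  "(\<Sum>b\<in>B. real (card (trace b))) = real (card V) * (real v - 1) / (real k - 1)"
proof -
  have finB: "finite B" using design_finite_blocks[OF design] .
  have "(\<Sum>b\<in>B. real (card (trace b))) = (\<Sum>b\<in>B. \<Sum>x\<in>V. if \<phi> x \<in> b then 1 else 0)"
    unfolding trace_def using finite_V by (simp add: sum.If_cases Int_def)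
  also have "\<dots> = (\<Sum>x\<in>V. \<Sum>b\<in>B. if \<phi> x \<in> b then 1 else 0)"
    by (rule sum.swap)
  also have "\<dots> = (\<Sum>x\<in>V. real (card {b\<in>B. \<phi> x \<in> b}))"
    using finB by (simp add: sum.If_cases Int_def)
  also have "\<dots> = (\<Sum>x\<in>V. (real v - 1) / (real k - 1))"
    using design_replication_real[OF design] maps_to by (intro sum.cong) auto
  finally show ?thesis by simp
qed

lemma sum_card_other_traces:
  "(\<Sum>b\<in>B - {b\<^sub>0}. real (card (trace b)))
     = real (card V) * (real v - 1) / (real k - 1) - real (card M)"
  using sum.remove[OF design_finite_blocks[OF design] block\<^sub>0, of "\<lambda>b. real (card (trace b))"]
  by (simp add: sum_card_trace trace_block\<^sub>0)

end

lemma design_embedding_exists: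
  assumes D: "is_design P B v k"
    and "finite V" "M \<subseteq> V" "card M \<le> k"
    and room: "int (card V) - int (card M) \<le> int v - int k"
  obtains \<phi> b\<^sub>0 where "design_embedding P B v k V M \<phi> b\<^sub>0"
proof -
  have finP: "finite P" and cardP: "card P = v" and "2 \<le> k"
    and blk: "\<And>b. b \<in> B \<Longrightarrow> b \<subseteq> P \<and> card b = k"
    using D unfolding is_design_def by auto
  have pair: "\<And>x y. x \<in> P \<Longrightarrow> y \<in> P \<Longrightarrow> x \<noteq> y \<Longrightarrow> \<exists>b. b \<in> B \<and> x \<in> b \<and> y \<in> b"
    using D unfolding is_design_def by blast
  have finM: "finite M" using assms(2,3) finite_subset by blast
  have "card M \<le> card V" using assms(2,3) card_mono by blast
  with room \<open>2 \<le> k\<close> have "2 \<le> card P" using cardP by linarith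
  then obtain p q where "p \<in> P" "q \<in> P" "p \<noteq> q"
    by (metis card_2_iff obtain_subset_with_card_n insert_subset)
  then obtain b\<^sub>0 where b\<^sub>0: "b\<^sub>0 \<in> B" using pair by blast
  then have b\<^sub>0P: "b\<^sub>0 \<subseteq> P" and "card b\<^sub>0 = k" using blk by auto
  then have finb\<^sub>0: "finite b\<^sub>0" using finP finite_subset by blast
  obtain g where g: "g ` M \<subseteq> b\<^sub>0" "inj_on g M"
    using card_le_inj[OF finM finb\<^sub>0] \<open>card b\<^sub>0 = k\<close> assms(4) by auto
  have "card (V - M) \<le> card (P - b\<^sub>0)"
    using card_Diff_subset[OF finM assms(3)] card_Diff_subset[OF finb\<^sub>0 b\<^sub>0P]
      \<open>card M \<le> card V\<close> room \<open>card b\<^sub>0 = k\<close> cardP by linarith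
  then obtain h where h: "h ` (V - M) \<subseteq> P - b\<^sub>0" "inj_on h (V - M)"
    using card_le_inj[of "V - M" "P - b\<^sub>0"] assms(2) finP by auto
  define \<phi> where "\<phi> x = (if x \<in> M then g x else h x)" for x
  have in_b\<^sub>0: "x \<in> V \<Longrightarrow> \<phi> x \<in> b\<^sub>0 \<longleftrightarrow> x \<in> M" for x
    using g h unfolding \<phi>_def by auto
  have "inj_on \<phi> V"
  proof (rule inj_onI)
    fix x y assume xy: "x \<in> V" "y \<in> V" "\<phi> x = \<phi> y"
    then have "x \<in> M \<longleftrightarrow> y \<in> M" using in_b\<^sub>0 by metis
    with xy g h show "x = y" unfolding \<phi>_def inj_on_def by (auto split: if_splits)
  qed
  moreover have "\<phi> ` V \<subseteq> P" using g h b\<^sub>0P unfolding \<phi>_def by auto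
  ultimately have "design_embedding P B v k V M \<phi> b\<^sub>0"
    using D assms(2,3) b\<^sub>0 in_b\<^sub>0 by (simp add: design_embedding_def)
  then show ?thesis by (rule that)
qed

theorem mainTheorem10:
  fixes V M :: "'a set" and EH :: "'a set set" and n m v k :: nat
  assumes "finite V" and "card V = n"
    and "M \<subseteq> V" and "card M = m"
    and "is_graph M EH"
    and "\<exists>(P :: nat set) B. is_design P B v k"
    and "k \<ge> m"
    and "int v - int k \<ge> int n - int m"
  shows "real (scp V (all_edges V - EH))
           \<le> real n * (real v - 1) / (real k - 1) + real (scp M (all_edges M - EH)) - real m"
proof -
  obtain P :: "nat set" and B where D: "is_design P B v k" using assms(6) by blast
  have "card M \<le> k" "int (card V) - int (card M) \<le> int v - int k"
    using assms(2,4,7,8) by auto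
  then obtain \<phi> b\<^sub>0 where "design_embedding P B v k V M \<phi> b\<^sub>0"
    using design_embedding_exists[OF D assms(1,3)] by blast
  then interpret design_embedding P B v k V M \<phi> b\<^sub>0 .
  have EH: "EH \<subseteq> all_edges M" and "finite M"
    using assms(5) unfolding is_graph_def by auto
  obtain F where F: "is_clique_partition M (all_edges M - EH) F"
    and scp_M: "scp M (all_edges M - EH) = (\<Sum>C\<in>F. card C)"
    using scp_attained[OF is_clique_partition_edges[OF \<open>finite M\<close> Diff_subset]] by blast
  have "finite F" using F unfolding is_clique_partition_def by blast
  have "scp V (all_edges V - EH) \<le> (\<Sum>C\<in>trace ` (B - {b\<^sub>0}) \<union> F. card C)"
    by (rule scp_le_sum[OF clique_partition_traces[OF EH F]])
  also have "\<dots> \<le> (\<Sum>C\<in>trace ` (B - {b\<^sub>0}). card C) + (\<Sum>C\<in>F. card C)"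
    using sum.union_inter[of "trace ` (B - {b\<^sub>0})" F card] design_finite_blocks[OF design]
      \<open>finite F\<close> by simp
  also have "\<dots> \<le> (\<Sum>b\<in>B - {b\<^sub>0}. card (trace b)) + scp M (all_edges M - EH)"
    using sum_image_le[of "B - {b\<^sub>0}" card trace] design_finite_blocks[OF design] scp_M by auto
  finally have "real (scp V (all_edges V - EH))
      \<le> (\<Sum>b\<in>B - {b\<^sub>0}. real (card (trace b))) + real (scp M (all_edges M - EH))"
    by (metis of_nat_add of_nat_le_iff of_nat_sum)
  then show ?thesis
    unfolding sum_card_other_traces assms(2,4)[symmetric] by linarith
qed

end
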